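(* Let $m\ge 2$ and $n\ge2$ be integers with $n\geq \lfloor m/2\rfloor+1$. Then $\gamma_{oir2}(P_m\Box K_n)=m(n-1)=\alpha(P_m)\beta(K_n)+\beta(P_m)|V(K_n)|-\min\{\beta(P_m),\beta(K_n)\}$.
   Context: $P_m$ is the path on $m$ vertices and $K_n$ the complete graph on $n$ vertices. $\alpha(F)$ is the independence number and $\beta(F)$ the vertex cover number of a graph $F$. For a graph $G$, a function $f:V(G)\to\mathcal{P}(\{1,2\})$ is an outer-independent 2-rainbow dominating function (OI2RD function) if every vertex $v$ with $f(v)=\emptyset$ satisfies $\bigcup_{u\in N(v)}f(u)=\{1,2\}$ and the set $\{v: f(v)=\emptyset\}$ is independent. The weight of $f$ is $\sum_{v}|f(v)|$ and $\gamma_{oir2}(G)$ is the minimum weight of an OI2RD function of $G$. The Cartesian product $G\Box H$ has vertex set $V(G)\times V(H)$, with $(x,y)(x',y')$ an edge iff either $x=x'$ and $yy'\in E(H)$, or $y=y'$ and $xx'\in E(G)$. *)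

theory Defs
  imports Main
begin

text \<open>A (finite, simple, undirected) graph is a pair of a vertex set and a
  symmetric irreflexive edge relation given as a set of ordered pairs.\<close>

type_synonym 'a graph = "'a set \<times> ('a \<times> 'a) set"

definition verts :: "'a graph \<Rightarrow> 'a set" where "verts G = fst G"
definition edges :: "'a graph \<Rightarrow> ('a \<times> 'a) set" where "edges G = snd G"

definition nbhd :: "'a graph \<Rightarrow> 'a \<Rightarrow> 'a set" where
  "nbhd G v = {u. (v, u) \<in> edges G}"

definition path_graph :: "nat \<Rightarrow> nat graph" where
  "path_graph m = ({0..<m}, {(i, j). i < m \<and> j < m \<and> (j = i + 1 \<or> i = j + 1)})"

definition complete_graph :: "nat \<Rightarrow> nat graph" where
  "complete_graph n = ({0..<n}, {(i, j). i < n \<and> j < n \<and> i \<noteq> j})"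

definition cart_prod :: "'a graph \<Rightarrow> 'b graph \<Rightarrow> ('a \<times> 'b) graph" where
  "cart_prod G H = (verts G \<times> verts H,
     {((x, y), (x', y')). (x = x' \<and> x \<in> verts G \<and> (y, y') \<in> edges H)
                        \<or> (y = y' \<and> y \<in> verts H \<and> (x, x') \<in> edges G)})"

definition independent_set :: "'a graph \<Rightarrow> 'a set \<Rightarrow> bool" where
  "independent_set G S \<longleftrightarrow> S \<subseteq> verts G \<and> (\<forall>u\<in>S. \<forall>v\<in>S. (u, v) \<notin> edges G)"

definition vertex_cover :: "'a graph \<Rightarrow> 'a set \<Rightarrow> bool" where
  "vertex_cover G S \<longleftrightarrow> S \<subseteq> verts G \<and> (\<forall>(u, v)\<in>edges G. u \<in> S \<or> v \<in> S)"

definition indep_number :: "'a graph \<Rightarrow> nat" where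
  "indep_number G = Max {card S | S. independent_set G S}"

definition cover_number :: "'a graph \<Rightarrow> nat" where
  "cover_number G = Min {card S | S. vertex_cover G S}"

definition oi2rd :: "'a graph \<Rightarrow> ('a \<Rightarrow> nat set) \<Rightarrow> bool" where
  "oi2rd G f \<longleftrightarrow>
     (\<forall>v\<in>verts G. f v \<subseteq> {1, 2}) \<and>
     (\<forall>v\<in>verts G. f v = {} \<longrightarrow> (\<Union>u\<in>nbhd G v. f u) = {1, 2}) \<and>
     independent_set G {v \<in> verts G. f v = {}}"

definition oi2rd_weight :: "'a graph \<Rightarrow> ('a \<Rightarrow> nat set) \<Rightarrow> nat" where
  "oi2rd_weight G f = (\<Sum>v\<in>verts G. card (f v))"

definition gamma_oir2 :: "'a graph \<Rightarrow> nat" where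
  "gamma_oir2 G = Min {oi2rd_weight G f | f. oi2rd G f}"

end

theory Submission
  imports Defs
begin

text \<open>Each fibre {x} \<times> V(K_n) is a clique, so an independent set of P_m \<box> K_n meets every
  fibre at most once; as the vertices labelled \<emptyset> form an independent set, at most m of the
  mn vertices are unlabelled and every other vertex costs at least 1, giving weight
  \<ge> m(n-1). Conversely, leaving the vertex (x, x mod 2) of each fibre unlabelled and
  labelling every other vertex of fibre x with {x mod 2 + 1} is an OI2RD function of weight
  exactly m(n-1): an unlabelled vertex sees the label of its own fibre and, along the path,
  the other label of a neighbouring fibre. The closed formula then only needs
  \<alpha>(P_m) = \<lceil>m/2\<rceil>, \<beta>(P_m) = \<lfloor>m/2\<rfloor> and \<beta>(K_n) = n - 1, where the hypothesis on n makes
  the minimum equal to \<lfloor>m/2\<rfloor>.\<close>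

lemma verts_path_graph [simp]: "verts (path_graph m) = {0..<m}"
  by (simp add: path_graph_def verts_def)

lemma edges_path_graph_iff [simp]:
  "(i, j) \<in> edges (path_graph m) \<longleftrightarrow> i < m \<and> j < m \<and> (j = i + 1 \<or> i = j + 1)"
  by (simp add: path_graph_def edges_def)

lemma verts_complete_graph [simp]: "verts (complete_graph n) = {0..<n}"
  by (simp add: complete_graph_def verts_def)

lemma edges_complete_graph_iff [simp]:
  "(i, j) \<in> edges (complete_graph n) \<longleftrightarrow> i < n \<and> j < n \<and> i \<noteq> j"
  by (simp add: complete_graph_def edges_def)

lemma verts_cart_prod [simp]: "verts (cart_prod G H) = verts G \<times> verts H"
  by (simp add: cart_prod_def verts_def)

lemma edges_cart_prod_iff [simp]:
  "((x, y), (x', y')) \<in> edges (cart_prod G H) \<longleftrightarrow>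
     (x = x' \<and> x \<in> verts G \<and> (y, y') \<in> edges H) \<or> (y = y' \<and> y \<in> verts H \<and> (x, x') \<in> edges G)"
  by (simp add: cart_prod_def edges_def)

lemma finite_cards_of_subsets:
  assumes "finite A"
  shows "finite {card S | S. S \<subseteq> A \<and> P S}"
  by (rule finite_subset[of _ "{..card A}"]) (auto intro: card_mono assms)

lemma cover_number_eqI:
  assumes "finite (verts G)" and "vertex_cover G S" and "card S = k"
    and "\<And>T. vertex_cover G T \<Longrightarrow> k \<le> card T"
  shows "cover_number G = k"
proof -
  have "finite {card T | T. vertex_cover G T}"
    using finite_cards_of_subsets[OF assms(1), of "vertex_cover G"]
    by (simp add: vertex_cover_def)
  then show ?thesis
    unfolding cover_number_def using assms(2-4) by (intro Min_eqI) auto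
qed

lemma indep_number_eqI:
  assumes "finite (verts G)" and "independent_set G S" and "card S = k"
    and "\<And>T. independent_set G T \<Longrightarrow> card T \<le> k"
  shows "indep_number G = k"
proof -
  have "finite {card T | T. independent_set G T}"
    using finite_cards_of_subsets[OF assms(1), of "independent_set G"]
    by (simp add: independent_set_def)
  then show ?thesis
    unfolding indep_number_def using assms(2-4) by (intro Max_eqI) auto
qed

lemma oi2rd_weight_le_twice_card:
  assumes "oi2rd G f"
  shows "oi2rd_weight G f \<le> 2 * card (verts G)"
proof -
  have "card (f v) \<le> 2" if "v \<in> verts G" for v
  proof -
    have "f v \<subseteq> {1, 2}" using assms that by (simp add: oi2rd_def)
    then have "card (f v) \<le> card {1, 2 :: nat}" by (rule card_mono[rotated]) simp
    then show ?thesis by simp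
  qed
  then have "oi2rd_weight G f \<le> (\<Sum>v\<in>verts G. 2)"
    unfolding oi2rd_weight_def by (rule sum_mono)
  then show ?thesis by simp
qed

lemma gamma_oir2_eqI:
  assumes "oi2rd G f" and "oi2rd_weight G f = w"
    and "\<And>g. oi2rd G g \<Longrightarrow> w \<le> oi2rd_weight G g"
  shows "gamma_oir2 G = w"
proof -
  have "finite {oi2rd_weight G g | g. oi2rd G g}"
    by (rule finite_subset[of _ "{..2 * card (verts G)}"])
       (auto dest: oi2rd_weight_le_twice_card)
  then show ?thesis
    unfolding gamma_oir2_def using assms by (intro Min_eqI) auto
qed

lemma oi2rd_weight_ge_card_labelled:
  assumes "finite (verts G)" and "oi2rd G f"
  shows "card (verts G) - card {v \<in> verts G. f v = {}} \<le> oi2rd_weight G f"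
proof -
  let ?Z = "{v \<in> verts G. f v = {}}"
  have "card (f v) \<ge> 1" if "v \<in> verts G - ?Z" for v
  proof -
    have "f v \<subseteq> {1, 2}" using assms(2) that by (simp add: oi2rd_def)
    then have "finite (f v)" by (rule finite_subset) simp
    moreover have "f v \<noteq> {}" using that by blast
    ultimately show ?thesis by (simp add: Suc_le_eq card_gt_0_iff)
  qed
  then have "card (verts G - ?Z) \<le> (\<Sum>v\<in>verts G - ?Z. card (f v))"
    using sum_mono[of "verts G - ?Z" "\<lambda>_. 1::nat"] by simp
  also have "\<dots> \<le> oi2rd_weight G f"
    unfolding oi2rd_weight_def using assms(1) by (intro sum_mono2) auto
  finally show ?thesis
    using assms(1) by (simp add: card_Diff_subset)
qed

lemma card_independent_set_cart_prod_complete_graph: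
  assumes "finite (verts G)" and "independent_set (cart_prod G (complete_graph n)) S"
  shows "card S \<le> card (verts G)"
proof -
  have "inj_on fst S"
  proof (rule inj_onI)
    fix a b assume "a \<in> S" "b \<in> S" "fst a = fst b"
    moreover from this have "(a, b) \<notin> edges (cart_prod G (complete_graph n))"
      using assms(2) by (simp add: independent_set_def)
    ultimately show "a = b"
      using assms(2) unfolding independent_set_def by (cases a, cases b) auto
  qed
  moreover have "fst ` S \<subseteq> verts G"
    using assms(2) by (auto simp: independent_set_def)
  ultimately show ?thesis
    using assms(1) by (metis card_inj_on_le)
qed

lemma oi2rd_weight_path_complete_ge:
  assumes "oi2rd (cart_prod (path_graph m) (complete_graph n)) f"
  shows "m * (n - 1) \<le> oi2rd_weight (cart_prod (path_graph m) (complete_graph n)) f"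
proof -
  let ?G = "cart_prod (path_graph m) (complete_graph n)"
  have "card {v \<in> verts ?G. f v = {}} \<le> m"
    using card_independent_set_cart_prod_complete_graph[of "path_graph m" n]
      assms by (simp add: oi2rd_def)
  moreover have "m * n - card {v \<in> verts ?G. f v = {}} \<le> oi2rd_weight ?G f"
    using oi2rd_weight_ge_card_labelled[OF _ assms] by simp
  ultimately show ?thesis
    by (simp add: diff_mult_distrib2)
qed

definition parity_labelling :: "nat \<times> nat \<Rightarrow> nat set" where
  "parity_labelling v = (if snd v = fst v mod 2 then {} else {fst v mod 2 + 1})"

lemma parity_labelling_oi2rd:
  assumes "m \<ge> 2" and "n \<ge> 2"
  shows "oi2rd (cart_prod (path_graph m) (complete_graph n)) parity_labelling"
proof -
  let ?G = "cart_prod (path_graph m) (complete_graph n)"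
  have "(\<Union>u\<in>nbhd ?G (x, x mod 2). parity_labelling u) = {1, 2}" if "x < m" for x
  proof -
    obtain x' where x': "x' < m" "x' = x + 1 \<or> x = x' + 1"
    proof (cases "x + 1 < m")
      case False
      then have "x = (x - 1) + 1" "x - 1 < m" using \<open>x < m\<close> \<open>m \<ge> 2\<close> by auto
      then show ?thesis using that by blast
    qed blast
    have "1 - x mod 2 \<noteq> x mod 2"
      by presburger
    then have "(x, 1 - x mod 2) \<in> nbhd ?G (x, x mod 2)"
      using \<open>x < m\<close> \<open>n \<ge> 2\<close> by (auto simp: nbhd_def)
    moreover have "(x', x mod 2) \<in> nbhd ?G (x, x mod 2)"
      using \<open>x < m\<close> \<open>n \<ge> 2\<close> x' by (auto simp: nbhd_def)
    moreover have "x' mod 2 \<noteq> x mod 2"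
      using x'(2) by presburger
    ultimately have "{x mod 2 + 1, x' mod 2 + 1} \<subseteq> (\<Union>u\<in>nbhd ?G (x, x mod 2). parity_labelling u)"
      by (force simp: parity_labelling_def)
    also have "{x mod 2 + 1, x' mod 2 + 1} = {1, 2}"
      using \<open>x' mod 2 \<noteq> x mod 2\<close> by auto
    finally show ?thesis
      by (auto simp: parity_labelling_def split: if_splits)
  qed
  moreover have "independent_set ?G {v \<in> verts ?G. parity_labelling v = {}}"
    unfolding independent_set_def
  proof (intro conjI ballI)
    fix u v assume "u \<in> {v \<in> verts ?G. parity_labelling v = {}}"
      and "v \<in> {v \<in> verts ?G. parity_labelling v = {}}"
    then obtain x x' where "u = (x, x mod 2)" "v = (x', x' mod 2)"
      by (auto simp: parity_labelling_def split: if_splits)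
    moreover have "x' \<noteq> x + 1" "x \<noteq> x' + 1" if "x mod 2 = x' mod 2"
      using that by presburger+
    ultimately show "(u, v) \<notin> edges ?G" by auto
  qed auto
  ultimately show ?thesis
    unfolding oi2rd_def by (auto simp: parity_labelling_def)
qed

lemma parity_labelling_weight:
  assumes "n \<ge> 2"
  shows "oi2rd_weight (cart_prod (path_graph m) (complete_graph n)) parity_labelling = m * (n - 1)"
proof -
  let ?V = "{0..<m} \<times> {0..<n}"
  let ?Z = "(\<lambda>x. (x, x mod 2)) ` {..<m}"
  have Z: "?Z \<subseteq> ?V" and card_Z: "card ?Z = m"
    using assms by (auto simp: card_image inj_on_def)
  have "oi2rd_weight (cart_prod (path_graph m) (complete_graph n)) parity_labelling
      = (\<Sum>v\<in>?V - ?Z. card (parity_labelling v)) + (\<Sum>v\<in>?Z. card (parity_labelling v))"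
    unfolding oi2rd_weight_def using Z by (simp add: sum.subset_diff)
  also have "\<dots> = (\<Sum>v\<in>?V - ?Z. 1)"
  proof -
    have "(\<Sum>v\<in>?Z. card (parity_labelling v)) = 0"
      by (simp add: parity_labelling_def)
    moreover have "card (parity_labelling v) = 1" if "v \<in> ?V - ?Z" for v
      using that by (cases v) (auto simp: parity_labelling_def)
    ultimately show ?thesis by simp
  qed
  also have "\<dots> = m * (n - 1)"
    using Z card_Z by (simp add: card_Diff_subset diff_mult_distrib2)
  finally show ?thesis .
qed

theorem gamma_oir2_path_complete:
  assumes "m \<ge> 2" and "n \<ge> 2"
  shows "gamma_oir2 (cart_prod (path_graph m) (complete_graph n)) = m * (n - 1)"
  using parity_labelling_oi2rd[OF assms] parity_labelling_weight[OF assms(2)]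
    oi2rd_weight_path_complete_ge by (rule gamma_oir2_eqI)

lemma cover_number_complete_graph:
  assumes "n \<ge> 1"
  shows "cover_number (complete_graph n) = n - 1"
proof (rule cover_number_eqI)
  show "vertex_cover (complete_graph n) {0..<n - 1}"
    by (auto simp: vertex_cover_def)
next
  fix S assume S: "vertex_cover (complete_graph n) S"
  have "x = y" if "x \<in> {0..<n} - S" "y \<in> {0..<n} - S" for x y
    using S that unfolding vertex_cover_def by fastforce
  then have "card ({0..<n} - S) \<le> 1"
    by (simp add: card_le_Suc0_iff_eq)
  moreover have "S \<subseteq> {0..<n}"
    using S by (simp add: vertex_cover_def)
  ultimately show "n - 1 \<le> card S"
    by (simp add: card_Diff_subset finite_subset)
qed auto

lemma cover_number_path_graph: "cover_number (path_graph m) = m div 2"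
proof (rule cover_number_eqI)
  show "vertex_cover (path_graph m) {i. i < m \<and> odd i}"
    by (auto simp: vertex_cover_def)
  have "{i. i < m \<and> odd i} = (\<lambda>k. 2 * k + 1) ` {..<m div 2}"
  proof (intro set_eqI iffI)
    fix i assume "i \<in> {i. i < m \<and> odd i}"
    then have "i = 2 * (i div 2) + 1" "i div 2 < m div 2" by (auto, presburger)
    then show "i \<in> (\<lambda>k. 2 * k + 1) ` {..<m div 2}" by blast
  qed auto
  then show "card {i. i < m \<and> odd i} = m div 2"
    by (simp add: card_image inj_on_def)
next
  fix S assume S: "vertex_cover (path_graph m) S"
  \<comment> \<open>each edge {2k, 2k+1} of the perfect matching contributes its own vertex of S\<close>
  define g where "g k = (if 2 * k \<in> S then 2 * k else 2 * k + 1)" for k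
  have "g ` {..<m div 2} \<subseteq> S"
  proof
    fix z assume "z \<in> g ` {..<m div 2}"
    then obtain k where "k < m div 2" "z = g k" by blast
    moreover have "(2 * k, 2 * k + 1) \<in> edges (path_graph m)"
      using \<open>k < m div 2\<close> by auto
    ultimately show "z \<in> S"
      using S unfolding vertex_cover_def g_def by auto
  qed
  moreover have "inj_on g {..<m div 2}"
    by (rule inj_on_inverseI[of _ "\<lambda>i. i div 2"]) (simp add: g_def)
  moreover have "finite S"
    using S by (auto simp: vertex_cover_def intro: finite_subset)
  ultimately show "m div 2 \<le> card S"
    by (metis card_image card_lessThan card_mono)
qed auto

lemma indep_number_path_graph: "indep_number (path_graph m) = (m + 1) div 2"
proof (rule indep_number_eqI)
  show "independent_set (path_graph m) {i. i < m \<and> even i}"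
    by (auto simp: independent_set_def)
  have "{i. i < m \<and> even i} = (\<lambda>k. 2 * k) ` {..<(m + 1) div 2}"
  proof (intro set_eqI iffI)
    fix i assume "i \<in> {i. i < m \<and> even i}"
    then have "i = 2 * (i div 2)" "i div 2 < (m + 1) div 2" by auto
    then show "i \<in> (\<lambda>k. 2 * k) ` {..<(m + 1) div 2}" by blast
  qed auto
  then show "card {i. i < m \<and> even i} = (m + 1) div 2"
    by (simp add: card_image inj_on_def)
next
  fix S assume S: "independent_set (path_graph m) S"
  then have S_sub: "S \<subseteq> {0..<m}"
    by (simp add: independent_set_def)
  have "inj_on (\<lambda>i. i div 2) S"
  proof (rule inj_onI, rule ccontr)
    fix a b assume "a \<in> S" "b \<in> S" "a div 2 = b div 2" "a \<noteq> b"
    then have "b = a + 1 \<or> a = b + 1" by presburger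
    then have "(a, b) \<in> edges (path_graph m)"
      using S_sub \<open>a \<in> S\<close> \<open>b \<in> S\<close> by auto
    then show False
      using S \<open>a \<in> S\<close> \<open>b \<in> S\<close> unfolding independent_set_def by blast
  qed
  moreover have "(\<lambda>i. i div 2) ` S \<subseteq> {..<(m + 1) div 2}"
    using S_sub by auto
  ultimately show "card S \<le> (m + 1) div 2"
    by (metis card_inj_on_le card_lessThan finite_lessThan)
qed auto

theorem mainTheorem5:
  fixes m n :: nat
  assumes "m \<ge> 2" and "n \<ge> 2" and "n \<ge> m div 2 + 1"
  shows "gamma_oir2 (cart_prod (path_graph m) (complete_graph n)) = m * (n - 1)
    \<and> int (m * (n - 1)) =
        int (indep_number (path_graph m)) * int (cover_number (complete_graph n))
        + int (cover_number (path_graph m)) * int (card (verts (complete_graph n)))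
        - int (min (cover_number (path_graph m)) (cover_number (complete_graph n)))"
proof
  show "gamma_oir2 (cart_prod (path_graph m) (complete_graph n)) = m * (n - 1)"
    using assms(1,2) by (rule gamma_oir2_path_complete)
next
  define a b c where "a = m div 2" and "b = (m + 1) div 2" and "c = n - 1"
  have "m = a + b" and "n = c + 1" and "min a c = a"
    using assms unfolding a_def b_def c_def by auto
  then have "int (m * (n - 1)) = int b * int c + int a * int n - int (min a c)"
    by (simp add: algebra_simps)
  then show "int (m * (n - 1)) =
        int (indep_number (path_graph m)) * int (cover_number (complete_graph n))
        + int (cover_number (path_graph m)) * int (card (verts (complete_graph n)))
        - int (min (cover_number (path_graph m)) (cover_number (complete_graph n)))"
    using assms by (simp add: a_def b_def c_def indep_number_path_graph cover_number_path_graph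
        cover_number_complete_graph)
qed

end
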